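(* There is a uniform constant $M>0$ such that for every $n\ge1$, every admissible $\boldsymbol\alpha=(\alpha_1,\dots,\alpha_n)$ with inverse branch $h_{\boldsymbol\alpha}=h_{\alpha_1}\circ\dots\circ h_{\alpha_n}$, every unit tangent vector $v$ and every $z\in T^nO_{\boldsymbol\alpha}$, $$|\partial_vJ_{\boldsymbol\alpha}(z)|\le M|J_{\boldsymbol\alpha}(z)|,$$ where $\partial_v$ denotes the directional derivative.
   Context: Fix $d\in\{1,2,3,7,11\}$, $\mathcal O$ the ring of integers of $\mathbb Q(\sqrt{-d})$ ($\mathbb Z[\sqrt{-d}]$ if $d\not\equiv3\bmod4$, $\mathbb Z[\frac{1+\sqrt{-d}}2]$ if $d\equiv3\bmod4$). $I\subset\mathbb C$ is $\{x+iy:|x|\le1/2,|y|\le\sqrt d/2\}$ if $d=1,2$ and $\{x+iy:|x|\le1/2,|y\pm x/\sqrt d|\le\frac{d+1}{4\sqrt d}\}$ if $d=3,7,11$; $I'=I\setminus\bigcup_\beta(I+\beta)$, $\beta\in\{1,\sqrt{-d}\}$ ($d=1,2$) or $\{1,\frac{1\pm\sqrt{-d}}2\}$ ($d=3,7,11$); $[z]\in\mathcal O$ is the unique element with $z-[z]\in I'$. $T(z)=1/z-[1/z]$ ($z\ne0$), $T(0)=0$; digits $\alpha_j(z)=[1/T^{j-1}(z)]$. For $\alpha\in\mathcal O$, $O_\alpha=\{z\in I\setminus\{0\}:[1/z]=\alpha\}$, and for non-empty $O_\alpha$, $h_\alpha:TO_\alpha\to O_\alpha$, $h_\alpha(z)=1/(z+\alpha)$.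 For $\boldsymbol\alpha\in\mathcal O^n$, $O_{\boldsymbol\alpha}=\{z\in I:\alpha_j(z)=\alpha_j,\ j\le n\}$; $\boldsymbol\alpha$ is admissible if $O_{\boldsymbol\alpha}\ne\emptyset$, and then $h_{\boldsymbol\alpha}:T^nO_{\boldsymbol\alpha}\to O_{\boldsymbol\alpha}$. $J_{\boldsymbol\alpha}$ is the Jacobian determinant of $h_{\boldsymbol\alpha}$ viewed as a map of $\mathbb R^2$, i.e. $J_{\boldsymbol\alpha}(z)=|h_{\boldsymbol\alpha}'(z)|^2$. *)

theory Defs
  imports "HOL-Analysis.Analysis"
begin

text \<open>Generator of the ring of integers of Q(sqrt(-d)).\<close>
definition omega_gen :: "nat \<Rightarrow> complex" where
  "omega_gen d = (if d mod 4 = 3 then (1 + \<i> * of_real (sqrt (real d))) / 2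
                  else \<i> * of_real (sqrt (real d)))"

definition ring_O :: "nat \<Rightarrow> complex set" where
  "ring_O d = {of_int a + of_int b * omega_gen d | a b. True}"

definition fund_I :: "nat \<Rightarrow> complex set" where
  "fund_I d = (if d = 1 \<or> d = 2 then
       {z. \<bar>Re z\<bar> \<le> 1/2 \<and> \<bar>Im z\<bar> \<le> sqrt (real d) / 2}
     else
       {z. \<bar>Re z\<bar> \<le> 1/2 \<and>
           \<bar>Im z + Re z / sqrt (real d)\<bar> \<le> (real d + 1) / (4 * sqrt (real d)) \<and>
           \<bar>Im z - Re z / sqrt (real d)\<bar> \<le> (real d + 1) / (4 * sqrt (real d))})"

definition shifts :: "nat \<Rightarrow> complex set" where
  "shifts d = (if d = 1 \<or> d = 2 then {1, \<i> * of_real (sqrt (real d))}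
               else {1, (1 + \<i> * of_real (sqrt (real d))) / 2,
                        (1 - \<i> * of_real (sqrt (real d))) / 2})"

definition fund_I' :: "nat \<Rightarrow> complex set" where
  "fund_I' d = fund_I d - (\<Union>\<beta>\<in>shifts d. (\<lambda>w. w + \<beta>) ` fund_I d)"

definition nint :: "nat \<Rightarrow> complex \<Rightarrow> complex" where
  "nint d z = (THE a. a \<in> ring_O d \<and> z - a \<in> fund_I' d)"

definition Tmap :: "nat \<Rightarrow> complex \<Rightarrow> complex" where
  "Tmap d z = (if z = 0 then 0 else 1 / z - nint d (1 / z))"

definition cyl :: "nat \<Rightarrow> complex list \<Rightarrow> complex set" where
  "cyl d as = {z \<in> fund_I d. \<forall>k < length as.
       (Tmap d ^^ k) z \<noteq> 0 \<and> nint d (1 / (Tmap d ^^ k) z) = as ! k}"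

definition admissible :: "nat \<Rightarrow> complex list \<Rightarrow> bool" where
  "admissible d as \<longleftrightarrow> cyl d as \<noteq> {}"

definition hmap :: "complex \<Rightarrow> complex \<Rightarrow> complex" where
  "hmap a z = 1 / (z + a)"

definition hbranch :: "complex list \<Rightarrow> complex \<Rightarrow> complex" where
  "hbranch as = foldr (\<lambda>a g. hmap a \<circ> g) as id"

text \<open>Jacobian determinant of h_alpha as a map of R^2: |h_alpha'(z)|^2.\<close>
definition Jac :: "complex list \<Rightarrow> complex \<Rightarrow> real" where
  "Jac as z = (cmod (deriv (hbranch as) z))\<^sup>2"

end

theory Submission
  imports Defs
begin

text \<open>The inverse branch \<open>h\<^sub>\<alpha>\<close> is a Moebius map \<open>w \<mapsto> (a w + b) / (c w + d)\<close> of
  determinant \<open>\<plusminus>1\<close>, so \<open>J\<^sub>\<alpha> = |c w + d|^-4\<close> and \<open>|\<partial>\<^sub>v J\<^sub>\<alpha>(z)| \<le> 4 |c / (c z + d)| J\<^sub>\<alpha>(z)\<close>.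
  Adding one digit changes \<open>c / (c z + d)\<close> by \<open>\<plusminus>x / (c z + d)^2\<close>, where \<open>x\<close> is a point of
  the orbit of \<open>h\<^sub>\<alpha>(z)\<close> under \<open>T\<close>, and \<open>1 / (c z + d)\<close> is the product of these orbit points.
  Since \<open>T\<close> maps into \<open>I\<close> (because \<open>I'\<close> is a fundamental domain of the lattice \<open>O\<close>) and \<open>I\<close> lies in
  the disc of radius \<open>r = 19/20\<close>, the increments sum to at most \<open>r / (1 - r^2)\<close>, uniformly
  in \<open>\<alpha>\<close>.\<close>

section \<open>Inverse branches as Moebius maps\<close>

text \<open>\<open>hbranch as\<close> is the Moebius map of the matrix \<open>(a b; c d)\<close> computed below:
  prepending a digit \<open>a\<close> multiplies the matrix on the left by \<open>(0 1; 1 a)\<close>.\<close>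

primrec mobius_coeffs :: "complex list \<Rightarrow> complex \<times> complex \<times> complex \<times> complex" where
  "mobius_coeffs [] = (1, 0, 0, 1)"
| "mobius_coeffs (a # bs) =
     (case mobius_coeffs bs of (p, q, r, s) \<Rightarrow> (r, s, p + a * r, q + a * s))"

definition mob_a :: "complex list \<Rightarrow> complex" where "mob_a as = fst (mobius_coeffs as)"
definition mob_b :: "complex list \<Rightarrow> complex" where "mob_b as = fst (snd (mobius_coeffs as))"
definition mob_c :: "complex list \<Rightarrow> complex" where "mob_c as = fst (snd (snd (mobius_coeffs as)))"
definition mob_d :: "complex list \<Rightarrow> complex" where "mob_d as = snd (snd (snd (mobius_coeffs as)))"

lemma mob_Nil [simp]: "mob_a [] = 1" "mob_b [] = 0" "mob_c [] = 0" "mob_d [] = 1"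
  by (simp_all add: mob_a_def mob_b_def mob_c_def mob_d_def)

lemma mob_Cons [simp]:
  "mob_a (a # bs) = mob_c bs" "mob_b (a # bs) = mob_d bs"
  "mob_c (a # bs) = mob_a bs + a * mob_c bs" "mob_d (a # bs) = mob_b bs + a * mob_d bs"
  by (simp_all add: mob_a_def mob_b_def mob_c_def mob_d_def split: prod.split)

lemma mob_det: "mob_a as * mob_d as - mob_b as * mob_c as = (-1) ^ length as"
  by (induction as) (simp_all add: algebra_simps)

definition branch_num :: "complex list \<Rightarrow> complex \<Rightarrow> complex" where
  "branch_num as w = mob_a as * w + mob_b as"

definition branch_den :: "complex list \<Rightarrow> complex \<Rightarrow> complex" where
  "branch_den as w = mob_c as * w + mob_d as"

lemma branch_num_Cons [simp]: "branch_num (a # bs) w = branch_den bs w"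
  by (simp add: branch_num_def branch_den_def)

lemma branch_den_Nil [simp]: "branch_den [] w = 1"
  by (simp add: branch_den_def)

lemma branch_den_Cons [simp]: "branch_den (a # bs) w = branch_num bs w + a * branch_den bs w"
  by (simp add: branch_num_def branch_den_def algebra_simps)

lemma hbranch_Nil [simp]: "hbranch [] = id"
  by (simp add: hbranch_def)

lemma hbranch_Cons [simp]: "hbranch (a # bs) w = 1 / (hbranch bs w + a)"
  by (simp add: hbranch_def hmap_def)

lemma hbranch_eq_num_div_den:
  assumes "\<forall>k \<le> length as. branch_den (drop k as) w \<noteq> 0"
  shows "hbranch as w = branch_num as w / branch_den as w"
  using assms
proof (induction as)
  case Nil
  then show ?case by (simp add: branch_num_def)
next
  case (Cons a bs)
  have "\<forall>k \<le> length bs. branch_den (drop k bs) w \<noteq> 0"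
    using Cons.prems by (metis Suc_le_mono drop_Suc_Cons length_Cons)
  then have hb_bs: "hbranch bs w = branch_num bs w / branch_den bs w"
    and u0: "branch_den bs w \<noteq> 0"
    using Cons.IH by (auto dest: spec[of _ 0])
  have "branch_den (a # bs) w \<noteq> 0"
    using Cons.prems by (metis drop0 le0)
  then show ?case
    unfolding hbranch_Cons hb_bs using u0 by (simp add: field_simps)
qed

lemma branch_den_Cons_eq:
  assumes "branch_den bs w \<noteq> 0" "hbranch bs w = branch_num bs w / branch_den bs w"
  shows "branch_den (a # bs) w = branch_den bs w / hbranch (a # bs) w"
proof -
  have "branch_den (a # bs) w = branch_den bs w * (hbranch bs w + a)"
    using assms by (simp add: field_simps)
  then show ?thesis by simp
qed

lemma branch_den_drop_nonzero:
  assumes "\<forall>k < length as. hbranch (drop k as) w \<noteq> 0"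
  shows "\<forall>k \<le> length as. branch_den (drop k as) w \<noteq> 0"
  using assms
proof (induction as)
  case Nil
  then show ?case by simp
next
  case (Cons a bs)
  have IH: "\<forall>k \<le> length bs. branch_den (drop k bs) w \<noteq> 0"
    using Cons by (metis Suc_mono drop_Suc_Cons length_Cons)
  then have "branch_den (a # bs) w \<noteq> 0"
    using Cons.prems branch_den_Cons_eq[OF _ hbranch_eq_num_div_den[OF IH], of a]
    by (metis drop0 le0 length_Cons zero_less_Suc divide_eq_0_iff)
  with IH show ?case by (metis Suc_le_mono drop0 drop_Suc_Cons length_Cons not0_implies_Suc)
qed

lemma mob_c_div_den_Cons:
  assumes "branch_den bs w \<noteq> 0" "hbranch bs w = branch_num bs w / branch_den bs w"
    and "hbranch (a # bs) w \<noteq> 0"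
  shows "mob_c (a # bs) / branch_den (a # bs) w
      = mob_c bs / branch_den bs w + (-1) ^ length bs * hbranch (a # bs) w / branch_den bs w ^ 2"
proof -
  define u where "u = branch_den bs w"
  define N where "N = branch_num bs w + a * u"
  have u0: "u \<noteq> 0" using assms(1) by (simp add: u_def)
  have "hbranch bs w + a \<noteq> 0" using assms(3) by auto
  then have N0: "N \<noteq> 0" using assms(1,2) by (simp add: N_def u_def field_simps)
  have hb: "hbranch (a # bs) w = u / N"
    unfolding hbranch_Cons assms(2) using u0 N0 by (simp add: N_def u_def field_simps)
  have "mob_a bs * u - mob_c bs * branch_num bs w = mob_a bs * mob_d bs - mob_b bs * mob_c bs"
    by (simp add: u_def branch_den_def branch_num_def algebra_simps)
  then have det: "mob_c bs * N + (-1) ^ length bs = (mob_a bs + a * mob_c bs) * u"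
    by (simp add: mob_det N_def algebra_simps)
  have "mob_c bs / u + (-1) ^ length bs * (u / N) / u ^ 2 = (mob_c bs * N + (-1) ^ length bs) / (u * N)"
    using u0 N0 by (simp add: field_simps power2_eq_square)
  also have "\<dots> = (mob_a bs + a * mob_c bs) / N"
    using u0 by (simp add: det)
  finally show ?thesis
    using hb by (simp add: u_def N_def)
qed

text \<open>Along an orbit in the disc of radius \<open>r < 1\<close>, the quotient \<open>mob_c / branch_den\<close> changes
  by at most \<open>r |1 / branch_den|^2\<close> per digit, while \<open>|1 / branch_den|\<close> shrinks by the factor \<open>r\<close>;
  the potential \<open>K (1 - |1 / branch_den|^2)\<close> with \<open>K = r / (1 - r^2)\<close> absorbs exactly these
  increments.\<close>

lemma norm_mob_c_div_den_le_potential: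
  fixes r :: real
  assumes r: "0 \<le> r" "r < 1"
    and orbit: "\<forall>k < length as. hbranch (drop k as) w \<noteq> 0 \<and> cmod (hbranch (drop k as) w) \<le> r"
  shows "cmod (mob_c as / branch_den as w) \<le> r / (1 - r^2) * (1 - cmod (1 / branch_den as w)^2)"
  using orbit
proof (induction as)
  case Nil
  then show ?case by simp
next
  case (Cons a bs)
  define K where "K = r / (1 - r^2)"
  define u where "u = branch_den bs w"
  define x where "x = hbranch (a # bs) w"
  define i where "i = cmod (1 / u)"
  have orbit_bs: "\<forall>k < length bs. hbranch (drop k bs) w \<noteq> 0 \<and> cmod (hbranch (drop k bs) w) \<le> r"
    using Cons.prems by (metis Suc_mono drop_Suc_Cons length_Cons)
  then have IH: "cmod (mob_c bs / u) \<le> K * (1 - i^2)"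
    using Cons.IH by (simp add: K_def u_def i_def)
  have den_bs: "\<forall>k \<le> length bs. branch_den (drop k bs) w \<noteq> 0"
    using branch_den_drop_nonzero orbit_bs by blast
  then have u0: "u \<noteq> 0" by (metis drop0 le0 u_def)
  have hb_bs: "hbranch bs w = branch_num bs w / u"
    using hbranch_eq_num_div_den[OF den_bs] by (simp add: u_def)
  have x0: "x \<noteq> 0" and x_le: "cmod x \<le> r"
    using Cons.prems by (auto simp: x_def dest: spec[of _ 0])
  have inv_den: "cmod (1 / branch_den (a # bs) w) = cmod x * i"
    using branch_den_Cons_eq[OF u0[unfolded u_def] hb_bs[unfolded u_def]] x0
    by (simp add: x_def u_def i_def norm_divide norm_mult)
  have "cmod (mob_c (a # bs) / branch_den (a # bs) w) \<le> cmod (mob_c bs / u) + cmod x * i^2"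
    using mob_c_div_den_Cons[OF u0[unfolded u_def] hb_bs[unfolded u_def] x0[unfolded x_def]]
      norm_triangle_ineq[of "mob_c bs / u" "(-1) ^ length bs * x / u^2"]
    by (simp add: u_def x_def i_def norm_mult norm_divide norm_power power_divide)
  also have "\<dots> \<le> K * (1 - i^2) + r * i^2"
    using IH x_le by (intro add_mono mult_right_mono) auto
  also have "\<dots> = K * (1 - r^2 * i^2)"
  proof -
    have "r^2 < 1" using r by (simp add: abs_square_less_1)
    then show ?thesis by (simp add: K_def field_simps)
  qed
  also have "\<dots> \<le> K * (1 - cmod (1 / branch_den (a # bs) w)^2)"
  proof -
    have "(cmod x * i)^2 \<le> (r * i)^2"
      using x_le by (intro power_mono mult_right_mono) (auto simp: i_def)
    moreover have "K \<ge> 0" using r by (simp add: K_def power_le_one)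
    ultimately show ?thesis
      unfolding inv_den by (intro mult_left_mono) (auto simp: power_mult_distrib)
  qed
  finally show ?case by (simp add: K_def)
qed

corollary norm_mob_c_div_den_le:
  fixes r :: real
  assumes "0 \<le> r" "r < 1"
    and "\<forall>k < length as. hbranch (drop k as) w \<noteq> 0 \<and> cmod (hbranch (drop k as) w) \<le> r"
  shows "cmod (mob_c as / branch_den as w) \<le> r / (1 - r^2)"
proof -
  have "r / (1 - r^2) \<ge> 0" using assms(1,2) by (simp add: power_le_one)
  then have "r / (1 - r^2) * (1 - cmod (1 / branch_den as w)^2) \<le> r / (1 - r^2)"
    by (intro mult_left_le) auto
  with norm_mob_c_div_den_le_potential[OF assms] show ?thesis by linarith
qed

section \<open>The Jacobian along a line\<close>

lemma open_branch_den_nonzero: "open {w. \<forall>k \<le> length as. branch_den (drop k as) w \<noteq> 0}"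
proof -
  have "{w. \<forall>k \<le> length as. branch_den (drop k as) w \<noteq> 0}
      = (\<Inter>k \<in> {..length as}. {w. branch_den (drop k as) w \<noteq> 0})"
    by auto
  moreover have "open {w. branch_den bs w \<noteq> 0}" for bs
    by (rule open_Collect_neq) (auto simp: branch_den_def intro!: continuous_intros)
  ultimately show ?thesis by auto
qed

lemma has_field_derivative_hbranch:
  assumes "\<forall>k \<le> length as. branch_den (drop k as) w \<noteq> 0"
  shows "(hbranch as has_field_derivative (-1) ^ length as / branch_den as w ^ 2) (at w)"
proof -
  have "branch_den as w \<noteq> 0" using assms by (metis drop0 le0)
  then have "((\<lambda>w. branch_num as w / branch_den as w)
      has_field_derivative (-1) ^ length as / branch_den as w ^ 2) (at w)"
    unfolding branch_num_def branch_den_def mob_det[symmetric]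
    by (auto intro!: derivative_eq_intros simp: field_simps power2_eq_square)
  then show ?thesis
    by (rule has_field_derivative_transform_within_open[OF _ open_branch_den_nonzero])
       (use assms hbranch_eq_num_div_den in auto)
qed

lemma Jac_eq:
  assumes "\<forall>k \<le> length as. branch_den (drop k as) w \<noteq> 0"
  shows "Jac as w = 1 / cmod (branch_den as w) ^ 4"
  using DERIV_imp_deriv[OF has_field_derivative_hbranch[OF assms]]
  by (simp add: Jac_def norm_divide norm_power power_divide flip: power_mult)

lemma has_real_derivative_inverse_norm_pow4:
  fixes u c :: "'a::real_inner"
  assumes "u \<noteq> 0"
  shows "((\<lambda>t. 1 / norm (u + t *\<^sub>R c) ^ 4) has_real_derivative - 4 * inner u c / norm u ^ 6) (at 0)"
proof -
  define A where "A = norm u ^ 2"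
  define B where "B = inner u c"
  define C where "C = norm c ^ 2"
  have "norm (u + t *\<^sub>R c) ^ 4 = (A + 2 * t * B + t ^ 2 * C) ^ 2" for t
  proof -
    have "norm (u + t *\<^sub>R c) ^ 2 = A + 2 * t * B + t ^ 2 * C"
      unfolding A_def B_def C_def power2_norm_eq_inner
      by (simp add: inner_add inner_commute algebra_simps power2_eq_square)
    moreover have "norm (u + t *\<^sub>R c) ^ 4 = (norm (u + t *\<^sub>R c) ^ 2) ^ 2"
      by (simp flip: power_mult)
    ultimately show ?thesis by simp
  qed
  moreover have "A \<noteq> 0" using assms by (simp add: A_def)
  then have "((\<lambda>t. 1 / (A + 2 * t * B + t ^ 2 * C) ^ 2) has_real_derivative - 4 * B / A ^ 3) (at 0)"
    by (auto intro!: derivative_eq_intros simp: field_simps eval_nat_numeral)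
  moreover have "A ^ 3 = norm u ^ 6" by (simp add: A_def flip: power_mult)
  ultimately show ?thesis by (simp add: B_def)
qed

lemma Jac_has_directional_derivative:
  assumes "\<forall>k \<le> length as. branch_den (drop k as) z \<noteq> 0"
  shows "((\<lambda>t. Jac as (z + of_real t * v)) has_real_derivative
            - 4 * inner (branch_den as z) (mob_c as * v) / cmod (branch_den as z) ^ 6) (at 0)"
proof -
  define S where "S = (\<lambda>t. z + of_real t * v) -` {w. \<forall>k \<le> length as. branch_den (drop k as) w \<noteq> 0}"
  have "open S"
    unfolding S_def by (intro continuous_open_vimage open_branch_den_nonzero) (auto intro!: continuous_intros)
  moreover have "0 \<in> S" using assms by (simp add: S_def)
  moreover have "Jac as (z + of_real t * v) = 1 / cmod (branch_den as z + t *\<^sub>R (mob_c as * v)) ^ 4"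
    if "t \<in> S" for t
    using Jac_eq that by (simp add: S_def branch_den_def scaleR_conv_of_real algebra_simps)
  moreover have "branch_den as z \<noteq> 0" using assms by (metis drop0 le0)
  ultimately show ?thesis
    by (intro has_field_derivative_transform_within_open[OF has_real_derivative_inverse_norm_pow4]) auto
qed

lemma Jac_directional_derivative_bound:
  assumes "\<forall>k \<le> length as. branch_den (drop k as) z \<noteq> 0" and "cmod v = 1"
  shows "\<exists>D. ((\<lambda>t. Jac as (z + of_real t * v)) has_real_derivative D) (at 0)
           \<and> \<bar>D\<bar> \<le> 4 * cmod (mob_c as / branch_den as z) * Jac as z"
proof (intro exI conjI)
  define u where "u = branch_den as z"
  have u0: "u \<noteq> 0" using assms(1) by (metis drop0 le0 u_def)
  show "((\<lambda>t. Jac as (z + of_real t * v)) has_real_derivative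
            - 4 * inner u (mob_c as * v) / cmod u ^ 6) (at 0)"
    using Jac_has_directional_derivative[OF assms(1)] by (simp add: u_def)
  have "\<bar>- 4 * inner u (mob_c as * v) / cmod u ^ 6\<bar> \<le> 4 * (cmod u * cmod (mob_c as)) / cmod u ^ 6"
    using Cauchy_Schwarz_ineq2[of u "mob_c as * v"] assms(2)
    by (simp add: abs_mult norm_mult divide_right_mono)
  also have "\<dots> = 4 * cmod (mob_c as / u) * (1 / cmod u ^ 4)"
    using u0 by (simp add: norm_divide field_simps eval_nat_numeral)
  finally show "\<bar>- 4 * inner u (mob_c as * v) / cmod u ^ 6\<bar> \<le> 4 * cmod (mob_c as / u) * Jac as z"
    using Jac_eq[OF assms(1)] by (simp add: u_def)
qed

section \<open>The nearest-integer map\<close>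

lemma translate_mem_iff: "w \<in> (\<lambda>w. w + \<beta>) ` A \<longleftrightarrow> w - \<beta> \<in> A"
  for w \<beta> :: "'a::ab_group_add"
  by (auto intro: image_eqI[of _ _ "w - \<beta>"])

lemma ring_O_iff: "a \<in> ring_O d \<longleftrightarrow> (\<exists>m n. a = of_int m + of_int n * omega_gen d)"
  by (auto simp: ring_O_def)

lemma ex1_int_half_open:
  fixes p t :: real
  assumes "p > 0"
  shows "\<exists>!n::int. - p / 2 \<le> t - n * p \<and> t - n * p < p / 2"
proof (rule ex_ex1I)
  define n where "n = \<lfloor>t / p + 1 / 2\<rfloor>"
  have "n \<le> t / p + 1 / 2" "t / p + 1 / 2 < n + 1"
    unfolding n_def by linarith+
  then show "\<exists>n::int. - p / 2 \<le> t - n * p \<and> t - n * p < p / 2"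
    using assms by (intro exI[of _ n]) (simp add: field_simps)
next
  fix n n' :: int
  assume "- p / 2 \<le> t - n * p \<and> t - n * p < p / 2" "- p / 2 \<le> t - n' * p \<and> t - n' * p < p / 2"
  then have "real_of_int (n - n') * p < 1 * p" "(-1) * p < real_of_int (n - n') * p"
    by (simp_all add: algebra_simps)
  then have "real_of_int (n - n') < 1" "-1 < real_of_int (n - n')"
    using assms mult_less_cancel_right_pos by blast+
  then show "n = n'" by linarith
qed

lemma fund_I'_rectangle_iff:
  assumes "d = 1 \<or> d = 2"
  shows "w \<in> fund_I' d \<longleftrightarrow> (- 1 / 2 \<le> Re w \<and> Re w < 1 / 2)
     \<and> (- sqrt d / 2 \<le> Im w \<and> Im w < sqrt d / 2)"
proof -
  define s where "s = sqrt d"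
  have "s > 0" using assms by (auto simp: s_def)
  have "w \<in> fund_I' d \<longleftrightarrow> (\<bar>Re w\<bar> \<le> 1 / 2 \<and> \<bar>Im w\<bar> \<le> s / 2)
      \<and> \<not> (\<bar>Re w - 1\<bar> \<le> 1 / 2 \<and> \<bar>Im w\<bar> \<le> s / 2) \<and> \<not> (\<bar>Re w\<bar> \<le> 1 / 2 \<and> \<bar>Im w - s\<bar> \<le> s / 2)"
    using assms unfolding fund_I'_def fund_I_def shifts_def s_def
    by (auto simp: translate_mem_iff)
  also have "\<dots> \<longleftrightarrow> (- 1 / 2 \<le> Re w \<and> Re w < 1 / 2) \<and> (- s / 2 \<le> Im w \<and> Im w < s / 2)"
    using \<open>s > 0\<close> unfolding abs_le_iff by auto
  finally show ?thesis by (simp add: s_def)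
qed

lemma ex1_representative_rectangle:
  assumes "d = 1 \<or> d = 2"
  shows "\<exists>!a. a \<in> ring_O d \<and> w - a \<in> fund_I' d"
proof -
  define s where "s = sqrt d"
  have s: "s > 0" using assms by (auto simp: s_def)
  have omega: "omega_gen d = \<i> * of_real s" using assms by (auto simp: omega_gen_def s_def)
  have mem: "w - (of_int m + of_int n * omega_gen d) \<in> fund_I' d
      \<longleftrightarrow> (- 1 / 2 \<le> Re w - of_int m \<and> Re w - of_int m < 1 / 2) \<and> (- s / 2 \<le> Im w - of_int n * s \<and> Im w - of_int n * s < s / 2)"
    for m n :: int
    unfolding fund_I'_rectangle_iff[OF assms] by (simp add: omega s_def)
  have m: "\<exists>!m::int. - 1 / 2 \<le> Re w - of_int m \<and> Re w - of_int m < 1 / 2"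
    using ex1_int_half_open[of 1 "Re w"] by simp
  have n: "\<exists>!n::int. - s / 2 \<le> Im w - of_int n * s \<and> Im w - of_int n * s < s / 2"
    by (rule ex1_int_half_open[OF s])
  show ?thesis
  proof (rule ex_ex1I)
    obtain m0 :: int where "- 1 / 2 \<le> Re w - of_int m0 \<and> Re w - of_int m0 < 1 / 2"
      using m by blast
    moreover obtain n0 :: int where "- s / 2 \<le> Im w - of_int n0 * s \<and> Im w - of_int n0 * s < s / 2"
      using n by blast
    ultimately have "w - (of_int m0 + of_int n0 * omega_gen d) \<in> fund_I' d"
      using mem by blast
    then show "\<exists>a. a \<in> ring_O d \<and> w - a \<in> fund_I' d"
      unfolding ring_O_iff by blast
  next
    fix a b
    assume "a \<in> ring_O d \<and> w - a \<in> fund_I' d" "b \<in> ring_O d \<and> w - b \<in> fund_I' d"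
    then obtain ma na mb nb where
      a: "a = of_int ma + of_int na * omega_gen d" "w - a \<in> fund_I' d" and
      b: "b = of_int mb + of_int nb * omega_gen d" "w - b \<in> fund_I' d"
      unfolding ring_O_iff by blast
    have "ma = mb" using m mem[of ma na] mem[of mb nb] a b by blast
    moreover have "na = nb" using n mem[of ma na] mem[of mb nb] a b by blast
    ultimately show "a = b" using a b by simp
  qed
qed

text \<open>For \<open>d mod 4 = 3\<close>, in the coordinates \<open>x = Re w\<close>, \<open>y = sqrt d * Im w\<close> the domain
  \<open>fund_I d\<close> is the hexagon below with \<open>e = (d + 1) / 2\<close>, and \<open>omega_gen d\<close> becomes the
  translation by \<open>(1/2, e - 1/2)\<close>.\<close>

definition hexagon :: "real \<Rightarrow> real \<Rightarrow> real \<Rightarrow> bool" where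
  "hexagon e x y \<longleftrightarrow> - 1 / 2 \<le> x \<and> x \<le> 1 / 2 \<and> - e / 2 \<le> y + x \<and> y + x \<le> e / 2
     \<and> - e / 2 \<le> y - x \<and> y - x \<le> e / 2"

definition hexagon_half_open :: "real \<Rightarrow> real \<Rightarrow> real \<Rightarrow> bool" where
  "hexagon_half_open e x y \<longleftrightarrow> - 1 / 2 \<le> x \<and> x < 1 / 2 \<and> - e / 2 \<le> y + x \<and> y + x < e / 2
     \<and> - e / 2 < y - x \<and> y - x \<le> e / 2"

lemma hexagon_half_open_iff:
  assumes e: "e \<ge> 1"
  shows "hexagon_half_open e x y \<longleftrightarrow> hexagon e x y \<and> \<not> hexagon e (x - 1) y
     \<and> \<not> hexagon e (x - 1 / 2) (y - (e - 1 / 2)) \<and> \<not> hexagon e (x - 1 / 2) (y + (e - 1 / 2))"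
    (is "?H \<longleftrightarrow> ?P \<and> ?N1 \<and> ?N2 \<and> ?N3")
proof
  assume ?H
  then have h: "- 1 / 2 \<le> x" "x < 1 / 2" "- e / 2 \<le> y + x" "y + x < e / 2" "- e / 2 < y - x" "y - x \<le> e / 2"
    by (simp_all add: hexagon_half_open_def)
  have ?P unfolding hexagon_def using h by (intro conjI) linarith+
  moreover have ?N1 unfolding hexagon_def using h by (intro notI, elim conjE) linarith
  moreover have ?N2 unfolding hexagon_def using h by (intro notI, elim conjE) linarith
  moreover have ?N3 unfolding hexagon_def using h by (intro notI, elim conjE) linarith
  ultimately show "?P \<and> ?N1 \<and> ?N2 \<and> ?N3" by blast
next
  assume A: "?P \<and> ?N1 \<and> ?N2 \<and> ?N3"
  then have p: "- 1 / 2 \<le> x" "x \<le> 1 / 2" "- e / 2 \<le> y + x" "y + x \<le> e / 2" "- e / 2 \<le> y - x" "y - x \<le> e / 2"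
    unfolding hexagon_def by blast+
  have "x \<noteq> 1 / 2"
  proof
    assume "x = 1 / 2"
    then have "hexagon e (x - 1) y" unfolding hexagon_def using p by (intro conjI) linarith+
    with A show False by blast
  qed
  moreover have "y + x \<noteq> e / 2"
  proof
    assume "y + x = e / 2"
    then have "hexagon e (x - 1 / 2) (y - (e - 1 / 2))"
      unfolding hexagon_def using p e by (intro conjI) linarith+
    with A show False by blast
  qed
  moreover have "y - x \<noteq> - e / 2"
  proof
    assume "y - x = - e / 2"
    then have "hexagon e (x - 1 / 2) (y + (e - 1 / 2))"
      unfolding hexagon_def using p e by (intro conjI) linarith+
    with A show False by blast
  qed
  ultimately show ?H using p unfolding hexagon_half_open_def by linarith
qed

lemma hexagon_half_open_exists:
  fixes e x y :: real
  assumes e: "e \<ge> 1"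
  shows "\<exists>(m::int) (n::int). hexagon_half_open e (x - m - n / 2) (y - n * (e - 1 / 2))"
proof -
  define q where "q = e - 1 / 2"
  have q: "q > 0" using e by (simp add: q_def)
  define n where "n = \<lfloor>y / q\<rfloor>"
  define y0 where "y0 = y - n * q"
  have "n \<le> y / q" "y / q < n + 1" unfolding n_def by linarith+
  then have y0: "0 \<le> y0" "y0 < q" using q by (simp_all add: y0_def field_simps)
  define m where "m = \<lfloor>x - n / 2 + 1 / 2\<rfloor>"
  define x0 where "x0 = x - m - n / 2"
  have x0: "- 1 / 2 \<le> x0" "x0 < 1 / 2" unfolding x0_def m_def by linarith+
  consider "y0 + x0 < e / 2 \<and> y0 - x0 \<le> e / 2" | "\<not> (y0 + x0 < e / 2 \<and> y0 - x0 \<le> e / 2)" "0 \<le> x0"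
    | "\<not> (y0 + x0 < e / 2 \<and> y0 - x0 \<le> e / 2)" "x0 < 0"
    by linarith
  then show ?thesis
  proof cases
    case 1
    then have "hexagon_half_open e (x - m - n / 2) (y - n * (e - 1 / 2))"
      using x0 y0 e unfolding hexagon_half_open_def x0_def y0_def q_def by linarith
    then show ?thesis by blast
  next
    case 2
    then have "hexagon_half_open e (x - m - (n + 1) / 2) (y - (n + 1) * (e - 1 / 2))"
      using x0 y0 e unfolding hexagon_half_open_def x0_def y0_def q_def
      by (simp add: algebra_simps add_divide_distrib)
    then show ?thesis by (metis of_int_1 of_int_add)
  next
    case 3
    then have "hexagon_half_open e (x - (m - 1) - (n + 1) / 2) (y - (n + 1) * (e - 1 / 2))"
      using x0 y0 e unfolding hexagon_half_open_def x0_def y0_def q_def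
      by (simp add: algebra_simps add_divide_distrib) linarith
    then show ?thesis by (metis of_int_1 of_int_add of_int_diff)
  qed
qed

lemma hexagon_half_open_unique:
  fixes m n m' n' :: int and e x y :: real
  assumes e: "e \<ge> 1"
    and "hexagon_half_open e (x - m - n / 2) (y - n * (e - 1 / 2))"
    and "hexagon_half_open e (x - m' - n' / 2) (y - n' * (e - 1 / 2))"
  shows "m = m' \<and> n = n'"
proof -
  define k where "k = m' - m"
  define l where "l = n' - n"
  have "(x - m - n / 2) - (x - m' - n' / 2) = k + l / 2"
    and "(y - n * (e - 1 / 2) + (x - m - n / 2)) - (y - n' * (e - 1 / 2) + (x - m' - n' / 2)) = k + l * e"
    and "(y - n * (e - 1 / 2) - (x - m - n / 2)) - (y - n' * (e - 1 / 2) - (x - m' - n' / 2)) = l * (e - 1) - k"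
    by (simp_all add: k_def l_def algebra_simps diff_divide_distrib)
  then have b: "- 1 < k + l / 2" "k + l / 2 < 1" "- e < k + l * e" "k + l * e < e"
      "- e < l * (e - 1) - k" "l * (e - 1) - k < e"
    using assms(2,3) unfolding hexagon_half_open_def by linarith+
  have "l * (2 * e - 1) = (k + l * e) + (l * (e - 1) - k)"
    by (simp add: algebra_simps)
  then have sum: "- 2 * e < l * (2 * e - 1)" "l * (2 * e - 1) < 2 * e"
    using b(3-6) by linarith+
  have "l \<le> 1"
  proof (rule ccontr)
    assume "\<not> l \<le> 1"
    then have "2 * (2 * e - 1) \<le> l * (2 * e - 1)"
      using e by (intro mult_right_mono) auto
    then show False using sum e by (simp add: algebra_simps)
  qed
  moreover have "l \<ge> -1"
  proof (rule ccontr)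
    assume "\<not> l \<ge> -1"
    then have "2 * (2 * e - 1) \<le> - l * (2 * e - 1)"
      using e by (intro mult_right_mono) auto
    then show False using sum e by (simp add: algebra_simps)
  qed
  ultimately have l: "l = 0 \<or> l = 1 \<or> l = -1" by linarith
  then have "- 1 < real_of_int k \<and> real_of_int k < 1"
    using b by auto
  then have "k = 0" by simp
  then have "l = 0" using l b(3,4) by auto
  with \<open>k = 0\<close> show ?thesis by (simp add: k_def l_def)
qed

lemma fund_I_hexagon_iff:
  assumes "d mod 4 = 3"
  shows "w \<in> fund_I d \<longleftrightarrow> hexagon ((real d + 1) / 2) (Re w) (sqrt d * Im w)"
proof -
  define s where "s = sqrt d"
  have s: "s > 0" and d: "\<not> (d = 1 \<or> d = 2)" using assms by (auto simp: s_def)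
  have scale: "\<bar>a + b / s\<bar> \<le> (real d + 1) / (4 * s) \<longleftrightarrow> \<bar>s * a + b\<bar> \<le> (real d + 1) / 4" for a b
  proof -
    have "\<bar>s * a + b\<bar> = s * \<bar>a + b / s\<bar>" and "(real d + 1) / 4 = s * ((real d + 1) / (4 * s))"
      using s by (simp_all add: abs_mult field_simps)
    then show ?thesis using s by (metis mult_le_cancel_left_pos)
  qed
  define e where "e = (real d + 1) / 2"
  have "w \<in> fund_I d \<longleftrightarrow>
      \<bar>Re w\<bar> \<le> 1 / 2 \<and> \<bar>s * Im w + Re w\<bar> \<le> e / 2 \<and> \<bar>s * Im w - Re w\<bar> \<le> e / 2"
    using d scale[of "Im w" "Re w"] scale[of "Im w" "- Re w"]
    by (simp add: fund_I_def s_def e_def)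
  also have "\<dots> \<longleftrightarrow> hexagon e (Re w) (s * Im w)"
    unfolding hexagon_def abs_le_iff by linarith
  finally show ?thesis by (simp add: e_def s_def)
qed

lemma fund_I'_hexagon_iff:
  assumes "d mod 4 = 3"
  shows "w \<in> fund_I' d \<longleftrightarrow> hexagon_half_open ((real d + 1) / 2) (Re w) (sqrt d * Im w)"
proof -
  define s where "s = sqrt d"
  have ss: "s * s = real d" by (simp add: s_def)
  have sh: "shifts d = {1, (1 + \<i> * of_real s) / 2, (1 - \<i> * of_real s) / 2}"
    using assms by (auto simp: shifts_def s_def)
  have "d \<ge> 3" using assms mod_less_eq_dividend[of d 4] by simp
  then have e: "(real d + 1) / 2 \<ge> 1" by simp
  have half: "(real d + 1) / 2 - 1 / 2 = real d / 2" by (simp add: field_simps)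
  show ?thesis
    unfolding fund_I'_def sh hexagon_half_open_iff[OF e, unfolded half]
    using fund_I_hexagon_iff[OF assms] ss by (simp add: translate_mem_iff s_def algebra_simps)
qed

lemma ex1_representative_hexagonal:
  assumes "d mod 4 = 3"
  shows "\<exists>!a. a \<in> ring_O d \<and> w - a \<in> fund_I' d"
proof -
  define e where "e = (real d + 1) / 2"
  have "d \<ge> 3" using assms mod_less_eq_dividend[of d 4] by simp
  then have e: "e \<ge> 1" by (simp add: e_def)
  have mem: "w - (of_int m + of_int n * omega_gen d) \<in> fund_I' d
      \<longleftrightarrow> hexagon_half_open e (Re w - m - n / 2) (sqrt d * Im w - n * (e - 1 / 2))" for m n :: int
  proof -
    have shift: "of_int n * (e - 1 / 2) = of_int n * real d / 2"
      by (simp add: e_def field_simps)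
    show ?thesis
      using assms unfolding fund_I'_hexagon_iff[OF assms] omega_gen_def e_def[symmetric] shift
      by (simp add: algebra_simps)
  qed
  show ?thesis
  proof (rule ex_ex1I)
    obtain m n :: int where "hexagon_half_open e (Re w - m - n / 2) (sqrt d * Im w - n * (e - 1 / 2))"
      using hexagon_half_open_exists[OF e] by blast
    then show "\<exists>a. a \<in> ring_O d \<and> w - a \<in> fund_I' d"
      using mem unfolding ring_O_iff by blast
  next
    fix a b
    assume "a \<in> ring_O d \<and> w - a \<in> fund_I' d" "b \<in> ring_O d \<and> w - b \<in> fund_I' d"
    then obtain ma na mb nb where
      a: "a = of_int ma + of_int na * omega_gen d" "w - a \<in> fund_I' d" and
      b: "b = of_int mb + of_int nb * omega_gen d" "w - b \<in> fund_I' d"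
      unfolding ring_O_iff by blast
    then have "ma = mb \<and> na = nb"
      using hexagon_half_open_unique[OF e] mem by blast
    then show "a = b" using a b by simp
  qed
qed

lemma nint_representative:
  assumes "d = 1 \<or> d = 2 \<or> d mod 4 = 3"
  shows "nint d w \<in> ring_O d \<and> w - nint d w \<in> fund_I' d"
  unfolding nint_def
  by (rule theI') (use assms ex1_representative_rectangle ex1_representative_hexagonal in blast)

lemma Tmap_in_fund_I:
  assumes "d = 1 \<or> d = 2 \<or> d mod 4 = 3"
  shows "Tmap d w \<in> fund_I d"
proof (cases "w = 0")
  case True
  have "0 \<in> fund_I d" by (simp add: fund_I_def)
  with True show ?thesis by (simp add: Tmap_def)
next
  case False
  then show ?thesis
    using nint_representative[OF assms, of "1 / w"] by (simp add: Tmap_def fund_I'_def)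
qed

lemma funpow_Tmap_in_fund_I:
  assumes "d = 1 \<or> d = 2 \<or> d mod 4 = 3" and "w \<in> fund_I d"
  shows "(Tmap d ^^ k) w \<in> fund_I d"
  using assms Tmap_in_fund_I by (cases k) auto

lemma norm_le_of_mem_fund_I:
  assumes d: "d \<in> {1, 2, 3, 7, 11}" and w: "w \<in> fund_I d"
  shows "cmod w \<le> 19 / 20"
proof -
  have "(cmod w)^2 \<le> (19 / 20)^2"
  proof (cases "d = 1 \<or> d = 2")
    case True
    then have "\<bar>Re w\<bar> \<le> 1 / 2" "\<bar>Im w\<bar> \<le> sqrt d / 2" using w by (auto simp: fund_I_def)
    then have "(Re w)^2 \<le> (1 / 2)^2" "(Im w)^2 \<le> (sqrt d / 2)^2"
      using abs_le_square_iff[of "Re w" "1 / 2"] abs_le_square_iff[of "Im w" "sqrt d / 2"]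
      by simp_all
    moreover have "(sqrt d / 2)^2 \<le> 1 / 2" using True by (auto simp: power_divide)
    ultimately show ?thesis by (simp add: cmod_power2 power_divide)
  next
    case False
    then have d3: "d mod 4 = 3" "d \<in> {3, 7, 11}" using d by auto
    define e where "e = (real d + 1) / 2"
    define x where "x = \<bar>Re w\<bar>"
    define y where "y = sqrt d * Im w"
    have h: "hexagon e (Re w) y" using w fund_I_hexagon_iff[OF d3(1)] by (simp add: e_def y_def)
    then have x: "0 \<le> x" "x \<le> 1 / 2" and "\<bar>y\<bar> \<le> e / 2 - x"
      unfolding hexagon_def x_def by auto
    then have "y^2 \<le> (e / 2 - x)^2"
      using abs_le_square_iff[of y "e / 2 - x"] by simp
    moreover have "y^2 = real d * (Im w)^2" by (simp add: y_def power_mult_distrib)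
    ultimately have "real d * (cmod w)^2 \<le> real d * x^2 + (e / 2 - x)^2"
      by (simp add: cmod_power2 x_def algebra_simps)
    also have "\<dots> = e * x * (2 * x - 1) + (e / 2)^2"
      by (simp add: e_def power2_eq_square field_simps)
    also have "\<dots> \<le> (e / 2)^2"
      using x by (simp add: e_def mult_nonneg_nonpos)
    also have "\<dots> \<le> real d * (19 / 20)^2"
      using d3(2) by (auto simp: e_def power2_eq_square)
    finally show ?thesis using d3(2) by auto
  qed
  then show ?thesis by (rule power2_le_imp_le) simp
qed

section \<open>Orbits of cylinder points\<close>

lemma hbranch_funpow_Tmap:
  assumes "\<forall>j < length bs. (Tmap d ^^ j) y \<noteq> 0 \<and> nint d (1 / (Tmap d ^^ j) y) = bs ! j"
  shows "hbranch bs ((Tmap d ^^ length bs) y) = y"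
  using assms
proof (induction bs arbitrary: y)
  case Nil
  then show ?case by simp
next
  case (Cons b cs)
  have "\<forall>j < length cs. (Tmap d ^^ j) (Tmap d y) \<noteq> 0 \<and> nint d (1 / (Tmap d ^^ j) (Tmap d y)) = cs ! j"
    using Cons.prems by (auto simp del: funpow.simps simp: funpow_Suc_right dest: spec[of _ "Suc _"])
  then have "hbranch cs ((Tmap d ^^ length cs) (Tmap d y)) = Tmap d y"
    by (rule Cons.IH)
  moreover have "y \<noteq> 0" "nint d (1 / y) = b"
    using Cons.prems by (auto dest: spec[of _ 0])
  moreover have "(Tmap d ^^ length (b # cs)) y = (Tmap d ^^ length cs) (Tmap d y)"
    by (simp del: funpow.simps add: funpow_Suc_right)
  ultimately have "hbranch (b # cs) ((Tmap d ^^ length (b # cs)) y) = 1 / (Tmap d y + b)"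
    by simp
  also have "Tmap d y + b = 1 / y"
    using \<open>y \<noteq> 0\<close> \<open>nint d (1 / y) = b\<close> by (simp add: Tmap_def)
  finally show ?case by simp
qed

lemma hbranch_drop_cyl:
  assumes "x \<in> cyl d as" and k: "k \<le> length as"
  shows "hbranch (drop k as) ((Tmap d ^^ length as) x) = (Tmap d ^^ k) x"
proof -
  have orbit: "\<forall>j < length (drop k as). (Tmap d ^^ j) ((Tmap d ^^ k) x) \<noteq> 0
      \<and> nint d (1 / (Tmap d ^^ j) ((Tmap d ^^ k) x)) = drop k as ! j"
  proof (intro allI impI)
    fix j assume "j < length (drop k as)"
    then have "(Tmap d ^^ (j + k)) x \<noteq> 0 \<and> nint d (1 / (Tmap d ^^ (j + k)) x) = as ! (j + k)"
      using assms(1) unfolding cyl_def by auto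
    then show "(Tmap d ^^ j) ((Tmap d ^^ k) x) \<noteq> 0
        \<and> nint d (1 / (Tmap d ^^ j) ((Tmap d ^^ k) x)) = drop k as ! j"
      using k by (simp add: funpow_add add.commute)
  qed
  have "(Tmap d ^^ length (drop k as)) ((Tmap d ^^ k) x) = (Tmap d ^^ (length as - k + k)) x"
    by (simp add: funpow_add)
  also have "\<dots> = (Tmap d ^^ length as) x"
    using k by simp
  finally show ?thesis
    using hbranch_funpow_Tmap[OF orbit] by simp
qed

lemma cyl_orbit_in_disc:
  assumes "d \<in> {1, 2, 3, 7, 11}" and "x \<in> cyl d as"
  shows "\<forall>k < length as. hbranch (drop k as) ((Tmap d ^^ length as) x) \<noteq> 0
           \<and> cmod (hbranch (drop k as) ((Tmap d ^^ length as) x)) \<le> 19 / 20"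
proof (intro allI impI)
  fix k assume k: "k < length as"
  have "(Tmap d ^^ k) x \<in> fund_I d"
    using assms by (intro funpow_Tmap_in_fund_I) (auto simp: cyl_def)
  then show "hbranch (drop k as) ((Tmap d ^^ length as) x) \<noteq> 0
      \<and> cmod (hbranch (drop k as) ((Tmap d ^^ length as) x)) \<le> 19 / 20"
    using assms k hbranch_drop_cyl[OF assms(2), of k] norm_le_of_mem_fund_I
    by (auto simp: cyl_def)
qed

lemma cyl_directional_derivative_bound:
  assumes "d \<in> {1, 2, 3, 7, 11}" and "x \<in> cyl d as" and v: "cmod v = 1"
  defines "z \<equiv> (Tmap d ^^ length as) x"
  shows "\<exists>D. ((\<lambda>t. Jac as (z + of_real t * v)) has_real_derivative D) (at 0)
           \<and> \<bar>D\<bar> \<le> 4 * (380 / 39) * Jac as z"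
proof -
  have orbit: "\<forall>k < length as. hbranch (drop k as) z \<noteq> 0 \<and> cmod (hbranch (drop k as) z) \<le> 19 / 20"
    using cyl_orbit_in_disc[OF assms(1,2)] by (simp add: z_def)
  then have den: "\<forall>k \<le> length as. branch_den (drop k as) z \<noteq> 0"
    using branch_den_drop_nonzero by blast
  \<comment> \<open>\<open>380 / 39 = r / (1 - r^2)\<close> for \<open>r = 19 / 20\<close>\<close>
  have "cmod (mob_c as / branch_den as z) \<le> 380 / 39"
    using norm_mob_c_div_den_le[OF _ _ orbit] by (simp add: power_divide)
  moreover obtain D where "((\<lambda>t. Jac as (z + of_real t * v)) has_real_derivative D) (at 0)"
    and "\<bar>D\<bar> \<le> 4 * cmod (mob_c as / branch_den as z) * Jac as z"
    using Jac_directional_derivative_bound[OF den v] by blast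
  moreover have "Jac as z \<ge> 0" by (simp add: Jac_def)
  ultimately show ?thesis
    by (smt (verit) mult_right_mono)
qed

theorem proposition2p4:
  fixes d :: nat
  assumes "d \<in> {1, 2, 3, 7, 11}"
  shows "\<exists>M > 0. \<forall>as z v.
           length as \<ge> 1 \<and> admissible d as \<and>
           z \<in> (Tmap d ^^ length as) ` cyl d as \<and> cmod v = 1 \<longrightarrow>
           (\<exists>D. ((\<lambda>t. Jac as (z + of_real t * v)) has_real_derivative D) (at 0) \<and>
                \<bar>D\<bar> \<le> M * \<bar>Jac as z\<bar>)"
proof (rule exI[of _ "4 * (380 / 39)"], intro conjI allI impI)
  fix as z v
  assume "length as \<ge> 1 \<and> admissible d as \<and> z \<in> (Tmap d ^^ length as) ` cyl d as \<and> cmod v = 1"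
  then obtain x where "x \<in> cyl d as" "z = (Tmap d ^^ length as) x" "cmod v = 1"
    by blast
  then show "\<exists>D. ((\<lambda>t. Jac as (z + of_real t * v)) has_real_derivative D) (at 0)
      \<and> \<bar>D\<bar> \<le> 4 * (380 / 39) * \<bar>Jac as z\<bar>"
    using cyl_directional_derivative_bound[OF assms] by (simp add: Jac_def)
qed simp

end
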